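(* Let $X\subseteq\mathbb{R}^d$ be a H\"older set. Then the $c^\infty$-topology of $X$ coincides with the trace topology induced from $\mathbb{R}^d$.
   Context: The $c^\infty$-topology on $X\subseteq\mathbb{R}^d$ is the final topology with respect to all smooth curves $c:\mathbb{R}\to\mathbb{R}^d$ with $c(\mathbb{R})\subseteq X$. H\"older sets: for $0<\alpha\le1$, $r,h>0$ let $\Gamma^\alpha_d(r,h)=\{(x',x_d)\in\mathbb{R}^{d-1}\times\mathbb{R}: |x'|<r,\ h(|x'|/r)^\alpha<x_d<h\}$. An open $U$ has the uniform cusp property of index $\alpha$ if for every $x\in\partial U$ there are $\epsilon>0$, some $\Gamma=\Gamma^\alpha_d(r,h)$ and $A\in O(d)$ with $y+A\Gamma\subseteq U$ for all $y\in\overline U\cap B(x,\epsilon)$. An $\alpha$-set is a closed set $X$ with $X=\overline{\mathrm{int}(X)}\ne\emptyset$ such that $\mathrm{int}(X)$ has the uniform cusp property of index $\alpha$; a H\"older set is an $\alpha$-set for some $\alpha\in(0,1]$. *)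

theory Defs
  imports "HOL-Analysis.Analysis"
begin

definition smooth_curve :: "(real \<Rightarrow> 'a::euclidean_space) \<Rightarrow> bool" where
  "smooth_curve c \<longleftrightarrow>
     (\<exists>D :: nat \<Rightarrow> real \<Rightarrow> 'a. D 0 = c \<and>
        (\<forall>n t. (D n has_vector_derivative D (Suc n) t) (at t)))"

definition cinf_open :: "'a::euclidean_space set \<Rightarrow> 'a set \<Rightarrow> bool" where
  "cinf_open X U \<longleftrightarrow> U \<subseteq> X \<and>
     (\<forall>c. smooth_curve c \<and> range c \<subseteq> X \<longrightarrow> open (c -` U))"

text \<open>Distinguished unit vector playing the role of the last coordinate axis e_d;
  x' corresponds to x - (x.e_d) e_d.\<close>
definition e_last :: "'a::euclidean_space" where
  "e_last = (SOME b. b \<in> Basis)"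

definition holder_cusp :: "real \<Rightarrow> real \<Rightarrow> real \<Rightarrow> 'a::euclidean_space set" where
  "holder_cusp \<alpha> r h =
     {x. let x' = x - (x \<bullet> e_last) *\<^sub>R e_last; xd = x \<bullet> e_last in
         norm x' < r \<and> h * (norm x' / r) powr \<alpha> < xd \<and> xd < h}"

definition uniform_cusp_property :: "real \<Rightarrow> 'a::euclidean_space set \<Rightarrow> bool" where
  "uniform_cusp_property \<alpha> U \<longleftrightarrow>
     (\<forall>x \<in> frontier U. \<exists>\<epsilon>>0. \<exists>r>0. \<exists>h>0. \<exists>A. orthogonal_transformation A \<and>
        (\<forall>y \<in> closure U \<inter> ball x \<epsilon>. (\<lambda>z. y + A z) ` (holder_cusp \<alpha> r h :: 'a set) \<subseteq> U))"

definition alpha_set :: "real \<Rightarrow> 'a::euclidean_space set \<Rightarrow> bool" where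
  "alpha_set \<alpha> X \<longleftrightarrow> closed X \<and> X = closure (interior X) \<and> X \<noteq> {} \<and>
     uniform_cusp_property \<alpha> (interior X)"

definition holder_set :: "'a::euclidean_space set \<Rightarrow> bool" where
  "holder_set X \<longleftrightarrow> (\<exists>\<alpha>. 0 < \<alpha> \<and> \<alpha> \<le> 1 \<and> alpha_set \<alpha> X)"

end

theory Submission
  imports Defs "HOL-Computational_Algebra.Polynomial"
begin

text \<open>
  Smooth curves are continuous, so relatively open subsets of X are open in the
  c-infinity topology. Conversely, let U be c-infinity open and suppose x in U is a limit of
  points of X - U. Near x the uniform cusp condition provides a direction e such that every
  point y of X can be lifted to y + s e by a segment in X, and lifted points that are close
  to each other are joined by a segment in X as well. This yields a polygon
  y_0, y_0 + s_0 e, y_1 + s_0 e, y_1, ... in X with infinitely many vertices outside U,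
  converging to x faster than 2^(-k^2). By the special curve lemma of Kriegl and Michor such a
  polygon is traversed by a smooth curve in X that passes its k-th vertex at time 2^(-k).
  The preimage of U under this curve is open and contains 0, but it misses
  infinitely many of the times 2^(-k).
\<close>

section \<open>A smooth step function\<close>

fun n_times_differentiable :: "nat \<Rightarrow> (real \<Rightarrow> real) \<Rightarrow> bool" where
  "n_times_differentiable 0 f \<longleftrightarrow> True"
| "n_times_differentiable (Suc n) f \<longleftrightarrow>
     (\<exists>f'. (\<forall>t. (f has_real_derivative f' t) (at t)) \<and> n_times_differentiable n f')"

lemma n_times_differentiable_SucD: "n_times_differentiable (Suc n) f \<Longrightarrow> n_times_differentiable n f"
  by (induction n arbitrary: f) auto

lemma n_times_differentiable_SucI:
  "(\<And>t. (f has_real_derivative f' t) (at t)) \<Longrightarrow> n_times_differentiable n f' \<Longrightarrow>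
    n_times_differentiable (Suc n) f"
  by auto

lemma n_times_differentiable_const: "n_times_differentiable n (\<lambda>t. c)"
  by (induction n arbitrary: c) (auto intro!: exI[of _ "\<lambda>t. 0"])

lemma n_times_differentiable_add:
  "n_times_differentiable n f \<Longrightarrow> n_times_differentiable n g \<Longrightarrow>
    n_times_differentiable n (\<lambda>t. f t + g t)"
proof (induction n arbitrary: f g)
  case (Suc n)
  then obtain f' g' where "\<forall>t. (f has_real_derivative f' t) (at t)" "n_times_differentiable n f'"
    "\<forall>t. (g has_real_derivative g' t) (at t)" "n_times_differentiable n g'" by auto
  with Suc.IH show ?case by (auto intro!: exI[of _ "\<lambda>t. f' t + g' t"] derivative_eq_intros)
qed simp

lemma n_times_differentiable_mult:
  "n_times_differentiable n f \<Longrightarrow> n_times_differentiable n g \<Longrightarrow>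
    n_times_differentiable n (\<lambda>t. f t * g t)"
proof (induction n arbitrary: f g)
  case (Suc n)
  then obtain f' g'
    where f': "\<forall>t. (f has_real_derivative f' t) (at t)" "n_times_differentiable n f'"
      and g': "\<forall>t. (g has_real_derivative g' t) (at t)" "n_times_differentiable n g'"
    by auto
  have "n_times_differentiable n f" "n_times_differentiable n g"
    using Suc.prems n_times_differentiable_SucD by blast+
  then have "n_times_differentiable n (\<lambda>t. f' t * g t + f t * g' t)"
    using Suc.IH f' g' by (intro n_times_differentiable_add) auto
  with f' g' show ?case
    by (auto intro!: exI[of _ "\<lambda>t. f' t * g t + f t * g' t"] derivative_eq_intros)
qed simp

lemma n_times_differentiable_inverse:
  "n_times_differentiable n g \<Longrightarrow> (\<And>t. g t \<noteq> 0) \<Longrightarrow> n_times_differentiable n (\<lambda>t. inverse (g t))"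
proof (induction n arbitrary: g)
  case (Suc n)
  then obtain g' where g': "\<forall>t. (g has_real_derivative g' t) (at t)" "n_times_differentiable n g'"
    by auto
  have "n_times_differentiable n (\<lambda>t. inverse (g t))"
    using Suc n_times_differentiable_SucD by blast
  then have "n_times_differentiable n (\<lambda>t. - 1 * (g' t * (inverse (g t) * inverse (g t))))"
    using g' by (intro n_times_differentiable_mult n_times_differentiable_const)
  moreover have "((\<lambda>t. inverse (g t)) has_real_derivative
      - 1 * (g' t * (inverse (g t) * inverse (g t)))) (at t)" for t
    using DERIV_inverse_fun[OF g'(1)[rule_format] Suc.prems(2)] by (simp add: power2_eq_square)
  ultimately show ?case by (rule n_times_differentiable_SucI[rotated])
qed simp

lemma n_times_differentiable_affine:
  "n_times_differentiable n f \<Longrightarrow> n_times_differentiable n (\<lambda>t. f (a * t + b))"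
proof (induction n arbitrary: f)
  case (Suc n)
  then obtain f' where f': "\<forall>t. (f has_real_derivative f' t) (at t)" "n_times_differentiable n f'"
    by auto
  have "n_times_differentiable n (\<lambda>t. f' (a * t + b) * a)"
    using Suc.IH f' by (intro n_times_differentiable_mult n_times_differentiable_const)
  moreover have "((\<lambda>t. f (a * t + b)) has_real_derivative f' (a * t + b) * a) (at t)" for t
    by (rule DERIV_chain2[OF f'(1)[rule_format]]) (auto intro!: derivative_eq_intros)
  ultimately show ?case by (rule n_times_differentiable_SucI[rotated])
qed simp

lemma has_real_derivative_iterated_deriv:
  assumes "\<And>n. n_times_differentiable n f"
  shows "((deriv ^^ m) f has_real_derivative (deriv ^^ Suc m) f t) (at t)"
proof -
  have "n_times_differentiable n ((deriv ^^ m) f)" for n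
  proof (induction m arbitrary: n)
    case (Suc m)
    then obtain g' where "\<forall>t. ((deriv ^^ m) f has_real_derivative g' t) (at t)"
      and "n_times_differentiable n g'"
      using n_times_differentiable.simps(2) by blast
    moreover from this have "deriv ((deriv ^^ m) f) = g'" by (intro ext DERIV_imp_deriv) simp
    ultimately show ?case by simp
  qed (use assms in simp)
  then obtain g' where "\<forall>t. ((deriv ^^ m) f has_real_derivative g' t) (at t)"
    using n_times_differentiable.simps(2) by blast
  then show ?thesis by (metis DERIV_imp_deriv funpow.simps(2) o_apply)
qed

text \<open>All derivatives of the flat function exp(-1/t) have the form p(1/t) exp(-1/t).\<close>

definition exp_inv_poly :: "real poly \<Rightarrow> real \<Rightarrow> real" where
  "exp_inv_poly p t = (if t > 0 then poly p (1 / t) * exp (- (1 / t)) else 0)"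

lemma poly_times_exp_neg_tendsto_0: "((\<lambda>u::real. poly p u * exp (- u)) \<longlongrightarrow> 0) at_top"
proof -
  have "((\<lambda>u. \<Sum>i\<le>degree p. coeff p i * (u ^ i / exp u)) \<longlongrightarrow> (\<Sum>i\<le>degree p. coeff p i * 0)) at_top"
    by (intro tendsto_sum tendsto_mult tendsto_const tendsto_power_div_exp_0)
  then show ?thesis
    by (simp add: poly_altdef sum_distrib_right exp_minus divide_inverse mult.assoc)
qed

lemma has_real_derivative_exp_inv_poly:
  "(exp_inv_poly p has_real_derivative exp_inv_poly (monom 1 2 * (p - pderiv p)) t) (at t)"
proof (cases t "0::real" rule: linorder_cases)
  case less
  have "((\<lambda>_. 0) has_real_derivative 0) (at t)" by simp
  then have "(exp_inv_poly p has_real_derivative 0) (at t)"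
    by (rule has_field_derivative_transform_within_open[of _ _ _ "{..<0}"])
      (use less in \<open>auto simp: exp_inv_poly_def\<close>)
  with less show ?thesis by (simp add: exp_inv_poly_def)
next
  case greater
  have "((\<lambda>t. poly p (1 / t) * exp (- (1 / t))) has_real_derivative
      (- 1 / t^2) * poly (pderiv p) (1 / t) * exp (- (1 / t)) +
      poly p (1 / t) * (exp (- (1 / t)) * (1 / t^2))) (at t)"
    using greater by (auto intro!: derivative_eq_intros simp: power2_eq_square field_simps)
  moreover have "(- 1 / t^2) * poly (pderiv p) (1 / t) * exp (- (1 / t)) +
      poly p (1 / t) * (exp (- (1 / t)) * (1 / t^2)) = exp_inv_poly (monom 1 2 * (p - pderiv p)) t"
    using greater by (simp add: exp_inv_poly_def poly_monom algebra_simps power2_eq_square)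
  ultimately have "((\<lambda>t. poly p (1 / t) * exp (- (1 / t))) has_real_derivative
      exp_inv_poly (monom 1 2 * (p - pderiv p)) t) (at t)"
    by simp
  then show ?thesis
    by (rule has_field_derivative_transform_within_open[of _ _ _ "{0<..}"])
      (use greater in \<open>auto simp: exp_inv_poly_def\<close>)
next
  case equal
  have "((\<lambda>y. exp_inv_poly p y / y) \<longlongrightarrow> 0) (at 0)"
    unfolding filterlim_at_split
  proof
    show "((\<lambda>y. exp_inv_poly p y / y) \<longlongrightarrow> 0) (at_left 0)"
      by (rule tendsto_eventually)
        (auto simp: exp_inv_poly_def eventually_at_left_field intro: exI[of _ "-1"])
    have "((\<lambda>y. poly (monom 1 1 * p) (inverse y) * exp (- inverse y)) \<longlongrightarrow> 0) (at_right 0)"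
      using filterlim_compose[OF poly_times_exp_neg_tendsto_0 filterlim_inverse_at_top_right] .
    then show "((\<lambda>y. exp_inv_poly p y / y) \<longlongrightarrow> 0) (at_right 0)"
      by (rule tendsto_cong[THEN iffD1, rotated])
        (auto simp: exp_inv_poly_def eventually_at_right_field poly_monom divide_inverse
          intro!: exI[of _ 1])
  qed
  then have "(exp_inv_poly p has_real_derivative 0) (at 0)"
    by (simp add: has_field_derivative_iff exp_inv_poly_def)
  with equal show ?thesis by (simp add: exp_inv_poly_def)
qed

lemma n_times_differentiable_exp_inv_poly: "n_times_differentiable n (exp_inv_poly p)"
  by (induction n arbitrary: p) (auto intro: has_real_derivative_exp_inv_poly)

definition smooth_step :: "real \<Rightarrow> real" where
  "smooth_step t = exp_inv_poly 1 t / (exp_inv_poly 1 t + exp_inv_poly 1 (1 - t))"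

lemma exp_inv_poly_1_pos: "t > 0 \<Longrightarrow> exp_inv_poly 1 t > 0"
  and exp_inv_poly_1_eq_0: "t \<le> 0 \<Longrightarrow> exp_inv_poly 1 t = 0"
  and exp_inv_poly_1_nonneg: "exp_inv_poly 1 t \<ge> 0"
  by (auto simp: exp_inv_poly_def)

lemma smooth_step_denominator_pos: "exp_inv_poly 1 t + exp_inv_poly 1 (1 - t) > 0"
  by (smt (verit) exp_inv_poly_1_nonneg exp_inv_poly_1_pos)

lemma n_times_differentiable_smooth_step: "n_times_differentiable n smooth_step"
proof -
  have "n_times_differentiable n (\<lambda>t. exp_inv_poly 1 t *
      inverse (exp_inv_poly 1 t + exp_inv_poly 1 ((- 1) * t + 1)))"
    using smooth_step_denominator_pos
    by (intro n_times_differentiable_mult n_times_differentiable_inverse n_times_differentiable_add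
        n_times_differentiable_affine n_times_differentiable_exp_inv_poly) (auto simp: less_le)
  then show ?thesis
    by (simp add: smooth_step_def[abs_def] divide_inverse)
qed

lemma smooth_step_eq_0: "t \<le> 0 \<Longrightarrow> smooth_step t = 0"
  by (simp add: smooth_step_def exp_inv_poly_1_eq_0)

lemma smooth_step_eq_1: "t \<ge> 1 \<Longrightarrow> smooth_step t = 1"
  using exp_inv_poly_1_pos[of t] by (simp add: smooth_step_def exp_inv_poly_1_eq_0)

lemma smooth_step_bounds: "0 \<le> smooth_step t" "smooth_step t \<le> 1"
  using smooth_step_denominator_pos[of t] exp_inv_poly_1_nonneg[of t]
    exp_inv_poly_1_nonneg[of "1 - t"]
  by (auto simp: smooth_step_def)

lemma has_real_derivative_smooth_step_deriv:
  "((deriv ^^ n) smooth_step has_real_derivative (deriv ^^ Suc n) smooth_step t) (at t)"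
  by (rule has_real_derivative_iterated_deriv[OF n_times_differentiable_smooth_step])

lemma smooth_step_deriv_eq_0:
  assumes "t < 0 \<or> 1 < t"
  shows "(deriv ^^ Suc n) smooth_step t = 0"
  using assms
proof (induction n arbitrary: t)
  case 0
  define d where "d = (if t < 0 then - t else t - 1)"
  have "smooth_step t = smooth_step y" if "\<bar>t - y\<bar> < d" for y
    using 0 that by (auto simp: d_def smooth_step_eq_0 smooth_step_eq_1 split: if_splits)
  then show ?case
    using 0 by (intro DERIV_local_const[OF has_real_derivative_smooth_step_deriv[of 0], of d])
      (auto simp: d_def)
next
  case (Suc n)
  define d where "d = (if t < 0 then - t else t - 1)"
  have "(deriv ^^ Suc n) smooth_step t = (deriv ^^ Suc n) smooth_step y" if "\<bar>t - y\<bar> < d" for y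
  proof -
    have "y < 0 \<or> 1 < y" using Suc.prems that by (auto simp: d_def split: if_splits)
    then show ?thesis using Suc.IH Suc.prems by simp
  qed
  then show ?case
    using Suc.prems by (intro DERIV_local_const[OF has_real_derivative_smooth_step_deriv, of d])
      (auto simp: d_def)
qed

lemma smooth_step_deriv_bounded: "\<exists>M. \<forall>t. \<bar>(deriv ^^ n) smooth_step t\<bar> \<le> M"
proof -
  have "continuous_on {0..1} ((deriv ^^ n) smooth_step)"
    by (intro continuous_at_imp_continuous_on ballI
        DERIV_isCont[OF has_real_derivative_smooth_step_deriv])
  then obtain B where B: "\<And>t. t \<in> {0..1} \<Longrightarrow> \<bar>(deriv ^^ n) smooth_step t\<bar> \<le> B"
    using compact_continuous_image[of "{0..1}"] compact_imp_bounded bounded_iff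
    by (metis compact_Icc image_eqI real_norm_def)
  have "\<bar>(deriv ^^ n) smooth_step t\<bar> \<le> max B 1" for t
  proof (cases "t \<in> {0..1}")
    case False
    then show ?thesis
      using smooth_step_deriv_eq_0[of t] smooth_step_bounds[of t] by (cases n) auto
  qed (use B in fastforce)
  then show ?thesis by blast
qed

section \<open>Smooth curves through fast converging polygons\<close>

lemma has_vector_derivative_suminf:
  fixes f f' :: "nat \<Rightarrow> real \<Rightarrow> 'a::banach"
  assumes der: "\<And>k t. (f k has_vector_derivative f' k t) (at t)"
    and bound: "\<And>k t. norm (f' k t) \<le> M k" and "summable M"
    and summable_f: "\<And>t. summable (\<lambda>k. f k t)"
  shows "((\<lambda>t. \<Sum>k. f k t) has_vector_derivative (\<Sum>k. f' k t)) (at t)"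
proof -
  have unif: "uniform_limit UNIV (\<lambda>n t. \<Sum>k<n. f' k t) (\<lambda>t. \<Sum>k. f' k t) sequentially"
    by (rule Weierstrass_m_test[OF bound \<open>summable M\<close>])
  have "\<exists>g. \<forall>t\<in>UNIV. (\<lambda>k. f k t) sums g t \<and>
      (g has_derivative (\<lambda>h. h *\<^sub>R (\<Sum>k. f' k t))) (at t within UNIV)"
  proof (rule has_derivative_series[where f' = "\<lambda>k t h. h *\<^sub>R f' k t"])
    show "(f k has_derivative (\<lambda>h. h *\<^sub>R f' k t)) (at t within UNIV)" for k t
      using der by (simp add: has_vector_derivative_def)
    show "(\<lambda>k. f k t) sums (\<Sum>k. f k t)"
      using summable_f by (rule summable_sums)
  next
    fix e :: real assume "e > 0"
    with unif have "\<forall>\<^sub>F n in sequentially. \<forall>t\<in>UNIV. dist (\<Sum>k<n. f' k t) (\<Sum>k. f' k t) < e"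
      unfolding uniform_limit_iff by blast
    then show "\<forall>\<^sub>F n in sequentially. \<forall>t\<in>UNIV. \<forall>h.
        norm ((\<Sum>k<n. h *\<^sub>R f' k t) - h *\<^sub>R (\<Sum>k. f' k t)) \<le> e * norm h"
    proof (rule eventually_mono, intro ballI allI)
      fix n t and h :: real
      assume "\<forall>t\<in>UNIV. dist (\<Sum>k<n. f' k t) (\<Sum>k. f' k t) < e"
      then have "norm ((\<Sum>k<n. f' k t) - (\<Sum>k. f' k t)) < e"
        by (simp add: dist_norm)
      then have "\<bar>h\<bar> * norm ((\<Sum>k<n. f' k t) - (\<Sum>k. f' k t)) \<le> \<bar>h\<bar> * e"
        by (intro mult_left_mono) auto
      then show "norm ((\<Sum>k<n. h *\<^sub>R f' k t) - h *\<^sub>R (\<Sum>k. f' k t)) \<le> e * norm h"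
        by (simp add: scaleR_sum_right[symmetric] scaleR_diff_right[symmetric] mult.commute)
    qed
  qed auto
  then obtain g where g: "\<And>t. (\<lambda>k. f k t) sums g t"
    "\<And>t. (g has_derivative (\<lambda>h. h *\<^sub>R (\<Sum>k. f' k t))) (at t)" by auto
  have "g = (\<lambda>t. \<Sum>k. f k t)" by (simp add: fun_eq_iff sums_unique[OF g(1)])
  then show ?thesis using g(2) by (simp add: has_vector_derivative_def)
qed

lemma summable_power_times_half_power_square:
  fixes c :: real
  assumes "c \<ge> 0"
  shows "summable (\<lambda>k. c ^ k * (1/2) ^ (k * k))"
proof -
  have "(\<lambda>k. c * (1/2::real) ^ k) \<longlonglongrightarrow> 0"
    by (intro tendsto_mult_right_zero LIMSEQ_power_zero) simp
  then obtain N where N: "\<And>k. N \<le> k \<Longrightarrow> c * (1/2::real) ^ k < 1/2"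
    using order_tendstoD(2)[of _ 0 sequentially "1/2::real"] by (auto simp: eventually_sequentially)
  show ?thesis
  proof (rule summable_comparison_test'[OF summable_geometric[of "1/2::real"]])
    fix k assume "N \<le> k"
    then have "(c * (1/2::real) ^ k) ^ k \<le> (1/2) ^ k"
      using N[OF \<open>N \<le> k\<close>] assms by (intro power_mono) auto
    then show "norm (c ^ k * (1/2::real) ^ (k * k)) \<le> (1/2) ^ k"
      using assms by (simp add: power_mult_distrib power_mult)
  qed simp
qed

text \<open>
  On [2^(-k-1), 2^(-k)] only the k-th summand is not constant, so the curve
  moves along the k-th edge of the polygon. The n-th derivative of this summand grows like
  2^(kn), which the decay 2^(-k^2) of the edges beats.
\<close>

definition step_curve :: "'a::real_normed_vector \<Rightarrow> (nat \<Rightarrow> 'a) \<Rightarrow> real \<Rightarrow> 'a" where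
  "step_curve x w t = x + (\<Sum>k. smooth_step (2 ^ Suc k * t - 1) *\<^sub>R w k)"

lemma smooth_curve_step_curve:
  fixes w :: "nat \<Rightarrow> 'a::euclidean_space"
  assumes w: "\<And>k. norm (w k) \<le> C * (1/2) ^ (k * k)"
  shows "smooth_curve (step_curve x w)"
proof -
  define a :: "nat \<Rightarrow> real" where "a k = 2 ^ Suc k" for k
  define F where "F n k t = (a k ^ n * (deriv ^^ n) smooth_step (a k * t - 1)) *\<^sub>R w k" for n k t
  define D where "D n t = (if n = 0 then x else 0) + (\<Sum>k. F n k t)" for n t
  obtain M where M: "\<And>n t. \<bar>(deriv ^^ n) smooth_step t\<bar> \<le> M n"
    using smooth_step_deriv_bounded by metis
  define B where "B n k = M n * 2 ^ n * C * ((2 ^ n) ^ k * (1/2) ^ (k * k))" for n k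
  have M_nonneg: "M n \<ge> 0" for n
    using order_trans[OF abs_ge_zero M] .
  have "C \<ge> 0" using order_trans[OF norm_ge_zero w[of 0]] by simp
  have a_pow: "a k ^ n = 2 ^ n * (2 ^ n) ^ k" for n k
    by (simp add: a_def power_mult_distrib flip: power_mult)
  have F_bound: "norm (F n k t) \<le> B n k" for n k t
  proof -
    have "norm (F n k t) = a k ^ n * \<bar>(deriv ^^ n) smooth_step (a k * t - 1)\<bar> * norm (w k)"
      by (simp add: F_def a_def abs_mult)
    also have "\<dots> \<le> a k ^ n * M n * (C * (1/2) ^ (k * k))"
      by (intro mult_mono mult_left_mono M w) (auto simp: a_def M_nonneg)
    also have "\<dots> = B n k"
      by (simp add: B_def a_pow mult_ac)
    finally show ?thesis .
  qed
  have summable_B: "summable (B n)" for n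
    unfolding B_def using summable_power_times_half_power_square[of "2 ^ n"]
    by (intro summable_mult) simp
  have summable_F: "summable (\<lambda>k. F n k t)" for n t
    by (rule summable_comparison_test'[OF summable_B F_bound])
  have "(D n has_vector_derivative D (Suc n) t) (at t)" for n t
  proof -
    have F_deriv: "(F n k has_vector_derivative F (Suc n) k t) (at t)" for k t
    proof -
      have "((\<lambda>t. (deriv ^^ n) smooth_step (a k * t - 1)) has_real_derivative
          (deriv ^^ Suc n) smooth_step (a k * t - 1) * a k) (at t)"
        by (rule DERIV_chain2[OF has_real_derivative_smooth_step_deriv])
          (auto intro!: derivative_eq_intros)
      from has_vector_derivative_scaleR[OF DERIV_cmult[OF this, of "a k ^ n"]
          has_vector_derivative_const[of "w k"]]
      show ?thesis by (simp add: F_def[abs_def] mult_ac)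
    qed
    have "((\<lambda>t. \<Sum>k. F n k t) has_vector_derivative (\<Sum>k. F (Suc n) k t)) (at t)"
      by (rule has_vector_derivative_suminf[OF F_deriv F_bound summable_B summable_F])
    from has_vector_derivative_add[OF has_vector_derivative_const this]
    show ?thesis by (simp add: D_def[abs_def])
  qed
  moreover have "D 0 = step_curve x w"
    by (simp add: fun_eq_iff D_def F_def a_def step_curve_def)
  ultimately show ?thesis unfolding smooth_curve_def by (intro exI[of _ D]) simp
qed

lemma half_power_bracket:
  fixes t :: real
  assumes "0 < t" "t < 1"
  obtains m where "(1/2) ^ Suc m \<le> t" "t \<le> (1/2) ^ m"
proof -
  obtain n where n: "(1/2::real) ^ n < t" using real_arch_pow_inv[of t "1/2"] assms by auto
  define N where "N = (LEAST n. (1/2::real) ^ n < t)"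
  have N: "(1/2::real) ^ N < t" unfolding N_def by (rule LeastI[of _ n]) (rule n)
  then obtain m where m: "N = Suc m" using assms(2) by (cases N) auto
  then have "\<not> (1/2::real) ^ m < t"
    using not_less_Least[of m "\<lambda>n. (1/2::real) ^ n < t"] unfolding N_def by auto
  with N m show ?thesis by (intro that[of m]) auto
qed

lemma step_curve_nonpos:
  assumes "t \<le> 0"
  shows "step_curve x w t = x"
proof -
  have "smooth_step (2 ^ Suc k * t - 1) = 0" for k
  proof -
    have "(2::real) ^ Suc k * t \<le> 0"
      by (rule mult_nonneg_nonpos) (use assms in auto)
    then show ?thesis by (intro smooth_step_eq_0) linarith
  qed
  then show ?thesis by (simp add: step_curve_def)
qed

lemma telescoping_tail_sums:
  fixes v :: "nat \<Rightarrow> 'a::real_normed_vector"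
  assumes "v \<longlonglongrightarrow> x"
  shows "(\<lambda>i. v (i + j) - v (Suc (i + j))) sums (v j - x)"
  using sums_minus[OF telescope_sums[OF LIMSEQ_ignore_initial_segment[OF assms, of j]]] by simp

lemma step_curve_ge_1:
  assumes "v \<longlonglongrightarrow> x" "1 \<le> t"
  shows "step_curve x (\<lambda>k. v k - v (Suc k)) t = v 0"
proof -
  have "1 \<le> 2 ^ Suc k * t - 1" for k
  proof -
    have "(2::real) \<le> 2 ^ Suc k"
      using one_le_power[of "2::real" k] by simp
    then have "(2::real) * 1 \<le> 2 ^ Suc k * t"
      using assms(2) by (intro mult_mono) auto
    then show ?thesis by simp
  qed
  moreover have "(\<Sum>k. v k - v (Suc k)) = v 0 - x"
    using sums_unique[OF telescoping_tail_sums[OF assms(1), of 0]] by simp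
  ultimately show ?thesis
    by (simp add: step_curve_def smooth_step_eq_1)
qed

lemma step_curve_telescoping:
  assumes "v \<longlonglongrightarrow> x" "(1/2) ^ Suc m \<le> t" "t \<le> (1/2) ^ m"
  shows "step_curve x (\<lambda>k. v k - v (Suc k)) t =
    v (Suc m) + smooth_step (2 ^ Suc m * t - 1) *\<^sub>R (v m - v (Suc m))"
proof -
  define summand where "summand k = smooth_step (2 ^ Suc k * t - 1) *\<^sub>R (v k - v (Suc k))" for k
  define tail where "tail k = (if k \<le> m then 0 else v k - v (Suc k))" for k
  have "(\<lambda>i. tail (i + Suc m)) sums (v (Suc m) - x)"
    using telescoping_tail_sums[OF assms(1), of "Suc m"] by (simp add: tail_def)
  then have "tail sums (v (Suc m) - x + (\<Sum>i<Suc m. tail i))"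
    by (rule sums_iff_shift[THEN iffD1])
  then have tail: "tail sums (v (Suc m) - x)"
    by (simp add: tail_def)
  have "tail k + (if k = m then summand k else 0) = summand k" for k
  proof (cases k m rule: linorder_cases)
    case less
    have "(1/2::real) ^ m \<le> (1/2) ^ Suc k"
      by (rule power_decreasing) (use less in auto)
    then have "(2::real) ^ Suc k * t \<le> 2 ^ Suc k * (1/2) ^ Suc k"
      using assms(3) by (intro mult_left_mono) auto
    then have "2 ^ Suc k * t - 1 \<le> 0"
      by (simp add: power_one_over)
    with less show ?thesis by (simp add: summand_def tail_def smooth_step_eq_0)
  next
    case greater
    have "(1/2::real) ^ k \<le> (1/2) ^ Suc m"
      by (rule power_decreasing) (use greater in auto)
    then have "(2::real) ^ Suc k * (1/2) ^ k \<le> 2 ^ Suc k * t"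
      using assms(2) by (intro mult_left_mono) auto
    then have "1 \<le> 2 ^ Suc k * t - 1"
      by (simp add: power_one_over)
    with greater show ?thesis by (simp add: summand_def tail_def smooth_step_eq_1)
  qed (simp add: tail_def)
  then have "(\<lambda>k. tail k + (if k = m then summand k else 0)) = summand"
    by (intro ext)
  then have "summand sums (v (Suc m) - x + summand m)"
    using sums_add[OF tail sums_single[of m summand]] by simp
  then show ?thesis
    by (simp add: step_curve_def summand_def[abs_def] sums_iff)
qed

lemma smooth_curve_through_sequence:
  fixes v :: "nat \<Rightarrow> 'a::euclidean_space"
  assumes fast: "\<And>k. norm (v k - x) \<le> (1/2) ^ (k * k)"
    and segments: "\<And>k. closed_segment (v k) (v (Suc k)) \<subseteq> X" and "x \<in> X"
  shows "\<exists>c. smooth_curve c \<and> range c \<subseteq> X \<and> c 0 = x \<and> (\<forall>k. c ((1/2) ^ k) = v k)"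
proof (intro exI conjI allI subsetI)
  let ?c = "step_curve x (\<lambda>k. v k - v (Suc k))"
  have "v \<longlonglongrightarrow> x"
  proof (rule LIM_zero_cancel, rule Lim_null_comparison)
    have "norm (v k - x) \<le> (1/2) ^ k" for k
    proof -
      have "(1/2::real) ^ (k * k) \<le> (1/2) ^ k"
        by (rule power_decreasing) (auto simp: le_square)
      then show ?thesis using fast[of k] by linarith
    qed
    then show "\<forall>\<^sub>F k in sequentially. norm (v k - x) \<le> (1/2) ^ k"
      by (intro always_eventually allI)
  qed (rule LIMSEQ_power_zero, simp)
  have "norm (v k - v (Suc k)) \<le> 2 * (1/2) ^ (k * k)" for k
  proof -
    have "norm (v k - v (Suc k)) \<le> norm (v k - x) + norm (v (Suc k) - x)"
      using norm_triangle_ineq4[of "v k - x" "v (Suc k) - x"] by simp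
    also have "\<dots> \<le> (1/2) ^ (k * k) + (1/2) ^ (k * k)"
      using fast[of "Suc k"] power_decreasing[of "k * k" "Suc k * Suc k" "1/2::real"]
      by (intro add_mono fast) auto
    finally show ?thesis by simp
  qed
  then show "smooth_curve ?c" by (rule smooth_curve_step_curve)
  show "?c 0 = x" by (simp add: step_curve_nonpos)
  show "?c ((1/2) ^ k) = v k" for k
  proof -
    have "(1/2::real) ^ Suc k \<le> (1/2) ^ k"
      by (rule power_decreasing) auto
    then show ?thesis
      using step_curve_telescoping[OF \<open>v \<longlonglongrightarrow> x\<close>, of k "(1/2) ^ k"]
      by (simp add: power_one_over smooth_step_eq_1)
  qed
  fix p assume "p \<in> range ?c"
  then obtain t where p: "p = ?c t" by blast
  consider "t \<le> 0" | "1 \<le> t" | "0 < t" "t < 1"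
    by linarith
  then show "p \<in> X"
  proof cases
    case 1
    then show ?thesis using p \<open>x \<in> X\<close> by (simp add: step_curve_nonpos)
  next
    case 2
    then show ?thesis using p segments[of 0] step_curve_ge_1[OF \<open>v \<longlonglongrightarrow> x\<close>] by auto
  next
    case 3
    then obtain m where m: "(1/2) ^ Suc m \<le> t" "t \<le> (1/2) ^ m"
      by (rule half_power_bracket)
    define u where "u = smooth_step (2 ^ Suc m * t - 1)"
    have "p = (1 - u) *\<^sub>R v (Suc m) + u *\<^sub>R v m"
      using p step_curve_telescoping[OF \<open>v \<longlonglongrightarrow> x\<close> m] by (simp add: u_def algebra_simps)
    then have "p \<in> closed_segment (v (Suc m)) (v m)"
      using smooth_step_bounds unfolding in_segment(1) u_def by blast
    then show ?thesis
      using segments[of m] by (simp add: closed_segment_commute subset_iff)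
  qed
qed

section \<open>Polygonal paths near points of a Holder set\<close>

text \<open>
  This is all that is used of the uniform cusp property: near x, points of X can be lifted
  by s in direction e, and lifted points at distance less than some rho(s) are joined by a
  segment in X.
\<close>

definition liftable_at :: "'a::real_normed_vector set \<Rightarrow> 'a \<Rightarrow> bool" where
  "liftable_at X x \<longleftrightarrow> (\<exists>\<epsilon>>0. \<exists>h>0. \<exists>e. norm e = 1 \<and>
     (\<forall>s\<in>{0<..<h}. \<exists>\<rho>>0. \<forall>y\<in>X \<inter> ball x \<epsilon>.
        closed_segment y (y + s *\<^sub>R e) \<subseteq> X \<and>
        (\<forall>y'\<in>ball y \<rho>. closed_segment (y + s *\<^sub>R e) (y' + s *\<^sub>R e) \<subseteq> X)))"

lemma norm_e_last: "norm (e_last :: 'a::euclidean_space) = 1"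
  unfolding e_last_def by (auto simp: SOME_Basis)

lemma open_holder_cusp:
  assumes "\<alpha> > 0" "r > 0"
  shows "open (holder_cusp \<alpha> r h :: 'a::euclidean_space set)"
proof -
  define N where "N x = norm (x - (x \<bullet> e_last) *\<^sub>R e_last)" for x :: 'a
  have N: "continuous_on UNIV N"
    unfolding N_def by (intro continuous_intros)
  have cusp_height: "continuous_on UNIV (\<lambda>x. h * (N x / r) powr \<alpha>)"
    using assms by (intro continuous_intros continuous_on_powr' N) (auto simp: N_def)
  have last: "continuous_on UNIV (\<lambda>x::'a. x \<bullet> e_last)"
    by (intro continuous_intros)
  have cusp: "holder_cusp \<alpha> r h =
      {x. N x < r} \<inter> {x. h * (N x / r) powr \<alpha> < x \<bullet> e_last} \<inter> {x. x \<bullet> e_last < h}"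
    by (auto simp: holder_cusp_def N_def Let_def)
  have "open {x. N x < r}"
    by (rule open_Collect_less[OF N continuous_on_const])
  moreover have "open {x. h * (N x / r) powr \<alpha> < x \<bullet> e_last}"
    by (rule open_Collect_less[OF cusp_height last])
  moreover have "open {x::'a. x \<bullet> e_last < h}"
    by (rule open_Collect_less[OF last continuous_on_const])
  ultimately show ?thesis
    unfolding cusp by (intro open_Int)
qed

lemma scaleR_e_last_in_holder_cusp:
  assumes "0 < s" "s < h" "r > 0"
  shows "s *\<^sub>R e_last \<in> (holder_cusp \<alpha> r h :: 'a::euclidean_space set)"
proof -
  have "(e_last :: 'a) \<bullet> e_last = 1" using norm_e_last[where 'a='a] by (simp add: norm_eq_1)
  then show ?thesis using assms by (simp add: holder_cusp_def Let_def)
qed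

lemma closed_segment_affine_image:
  "linear A \<Longrightarrow> closed_segment (y + A a) (y + A b) = (\<lambda>z. y + A z) ` closed_segment a b"
  by (simp add: closed_segment_translation closed_segment_linear_image image_image)

lemma liftable_at_interior:
  fixes X :: "'a::euclidean_space set"
  assumes "x \<in> interior X"
  shows "liftable_at X x"
proof -
  obtain d where "d > 0" and d: "ball x d \<subseteq> X"
    using assms mem_interior by blast
  have segment: "closed_segment p q \<subseteq> X" if "dist x p < d" "dist x q < d" for p q
    using closed_segment_subset[of p "ball x d" q] d that by auto
  have lift: "dist x (p + s *\<^sub>R e_last) < d" if "dist x p + s < d" "0 \<le> s" for p s
  proof -
    have "dist x (p + s *\<^sub>R e_last) \<le> dist x p + dist p (p + s *\<^sub>R e_last)"
      by (rule dist_triangle)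
    also have "dist p (p + s *\<^sub>R e_last) = s"
      using that(2) by (simp add: dist_norm norm_e_last)
    finally show ?thesis using that(1) by simp
  qed
  have "\<exists>\<rho>>0. \<forall>y\<in>X \<inter> ball x (d/2). closed_segment y (y + s *\<^sub>R e_last) \<subseteq> X \<and>
      (\<forall>y'\<in>ball y \<rho>. closed_segment (y + s *\<^sub>R e_last) (y' + s *\<^sub>R e_last) \<subseteq> X)"
    if "0 < s" "s < d/2" for s
  proof (intro exI[of _ "d/2 - s"] conjI ballI)
    show "d/2 - s > 0" using that by simp
    fix y assume "y \<in> X \<inter> ball x (d/2)"
    then have y: "dist x y < d/2" by simp
    with that show "closed_segment y (y + s *\<^sub>R e_last) \<subseteq> X"
      by (intro segment lift) auto
    fix y' assume "y' \<in> ball y (d/2 - s)"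
    then have "dist x y' < d - s"
      using dist_triangle[of x y' y] y by (simp add: dist_commute)
    with y that show "closed_segment (y + s *\<^sub>R e_last) (y' + s *\<^sub>R e_last) \<subseteq> X"
      by (intro segment lift) auto
  qed
  then show ?thesis
    unfolding liftable_at_def using \<open>d > 0\<close> norm_e_last
    by (intro exI[of _ "d/2"] exI[of _ e_last] conjI) auto
qed

lemma closed_segment_lift_subset:
  fixes A :: "'a::euclidean_space \<Rightarrow> 'a"
  assumes "linear A" and image: "(\<lambda>z. y + A z) ` holder_cusp \<alpha> r h \<subseteq> X"
    and "y \<in> X" "0 < s" "s < h" "r > 0"
  shows "closed_segment y (y + s *\<^sub>R A e_last) \<subseteq> X"
proof -
  have in_X: "y + A z \<in> X" if z: "z \<in> closed_segment 0 (s *\<^sub>R e_last)" for z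
  proof -
    obtain u where u: "0 \<le> u" "u \<le> 1" "z = (1 - u) *\<^sub>R 0 + u *\<^sub>R (s *\<^sub>R e_last)"
      using z unfolding in_segment(1) by blast
    show ?thesis
    proof (cases "u = 0")
      case True
      then show ?thesis using u \<open>y \<in> X\<close> \<open>linear A\<close> by (simp add: linear_0)
    next
      case False
      have "u * s \<le> s"
        using u \<open>0 < s\<close> by (simp add: mult_left_le_one_le)
      then have "u * s < h"
        using \<open>s < h\<close> by linarith
      moreover have "0 < u * s"
        using False u \<open>0 < s\<close> by simp
      ultimately have "z \<in> holder_cusp \<alpha> r h"
        unfolding u(3) using \<open>r > 0\<close> by (simp add: scaleR_e_last_in_holder_cusp)
      with image show ?thesis by blast
    qed
  qed
  have "closed_segment y (y + s *\<^sub>R A e_last) = (\<lambda>z. y + A z) ` closed_segment 0 (s *\<^sub>R e_last)"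
    using closed_segment_affine_image[OF \<open>linear A\<close>, of y 0 "s *\<^sub>R e_last"] \<open>linear A\<close>
    by (simp add: linear_0 linear_cmul)
  then show ?thesis
    using in_X by (simp add: image_subset_iff)
qed

lemma closed_segment_shift_subset:
  fixes A :: "'a::euclidean_space \<Rightarrow> 'a"
  assumes A: "orthogonal_transformation A" and image: "(\<lambda>z. y + A z) ` holder_cusp \<alpha> r h \<subseteq> X"
    and ball: "ball (s *\<^sub>R e_last) \<rho> \<subseteq> (holder_cusp \<alpha> r h :: 'a set)" and "dist y y' < \<rho>"
  shows "closed_segment (y + s *\<^sub>R A e_last) (y' + s *\<^sub>R A e_last) \<subseteq> X"
proof -
  have "linear A" using A by (rule orthogonal_transformation_linear)
  have "y' - y \<in> A ` ball 0 \<rho>"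
    using \<open>dist y y' < \<rho>\<close> image_orthogonal_transformation_ball[OF A, of 0 \<rho>] \<open>linear A\<close>
    by (simp add: linear_0 dist_norm norm_minus_commute)
  then obtain d where d: "A d = y' - y" "norm d < \<rho>"
    by auto
  then have "\<rho> > 0"
    using norm_ge_zero[of d] by linarith
  with d have seg_ball: "closed_segment (s *\<^sub>R e_last) (s *\<^sub>R e_last + d) \<subseteq> ball (s *\<^sub>R e_last) \<rho>"
    by (intro closed_segment_subset) (auto simp: dist_norm)
  have "(\<lambda>z. y + A z) ` closed_segment (s *\<^sub>R e_last) (s *\<^sub>R e_last + d) \<subseteq> X"
    by (rule subset_trans[OF image_mono[OF subset_trans[OF seg_ball ball]] image])
  moreover have "closed_segment (y + s *\<^sub>R A e_last) (y' + s *\<^sub>R A e_last) =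
      (\<lambda>z. y + A z) ` closed_segment (s *\<^sub>R e_last) (s *\<^sub>R e_last + d)"
    using closed_segment_affine_image[OF \<open>linear A\<close>, of y "s *\<^sub>R e_last" "s *\<^sub>R e_last + d"]
      d(1) \<open>linear A\<close> by (simp add: linear_add linear_cmul add_ac)
  ultimately show ?thesis
    by simp
qed

lemma liftable_at_cusp:
  fixes X :: "'a::euclidean_space set" and A :: "'a \<Rightarrow> 'a"
  assumes "0 < \<alpha>" "r > 0" "h > 0" "\<epsilon> > 0" and A: "orthogonal_transformation A"
    and cusp: "\<And>y. y \<in> X \<Longrightarrow> dist x y < \<epsilon> \<Longrightarrow> (\<lambda>z. y + A z) ` holder_cusp \<alpha> r h \<subseteq> X"
  shows "liftable_at X x"
proof -
  have "\<exists>\<rho>>0. \<forall>y\<in>X \<inter> ball x \<epsilon>. closed_segment y (y + s *\<^sub>R A e_last) \<subseteq> X \<and>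
      (\<forall>y'\<in>ball y \<rho>. closed_segment (y + s *\<^sub>R A e_last) (y' + s *\<^sub>R A e_last) \<subseteq> X)"
    if "0 < s" "s < h" for s
  proof -
    have "s *\<^sub>R e_last \<in> (holder_cusp \<alpha> r h :: 'a set)"
      using that \<open>r > 0\<close> by (rule scaleR_e_last_in_holder_cusp)
    then obtain \<rho> where "\<rho> > 0" and \<rho>: "ball (s *\<^sub>R e_last) \<rho> \<subseteq> (holder_cusp \<alpha> r h :: 'a set)"
      using open_holder_cusp[OF \<open>0 < \<alpha>\<close> \<open>r > 0\<close>] open_contains_ball by blast
    have "linear A" using A by (rule orthogonal_transformation_linear)
    show ?thesis
    proof (intro exI[of _ \<rho>] conjI ballI \<open>\<rho> > 0\<close>)
      fix y assume "y \<in> X \<inter> ball x \<epsilon>"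
      then have y: "y \<in> X" and image: "(\<lambda>z. y + A z) ` holder_cusp \<alpha> r h \<subseteq> X"
        using cusp by auto
      show "closed_segment y (y + s *\<^sub>R A e_last) \<subseteq> X"
        by (rule closed_segment_lift_subset[OF \<open>linear A\<close> image y that \<open>r > 0\<close>])
      fix y' assume "y' \<in> ball y \<rho>"
      then show "closed_segment (y + s *\<^sub>R A e_last) (y' + s *\<^sub>R A e_last) \<subseteq> X"
        by (intro closed_segment_shift_subset[OF A image \<rho>]) simp
    qed
  qed
  moreover have "norm (A e_last) = 1"
    using orthogonal_transformation_norm[OF A] norm_e_last by metis
  ultimately show ?thesis
    unfolding liftable_at_def using \<open>h > 0\<close> \<open>\<epsilon> > 0\<close>
    by (intro exI[of _ \<epsilon>] exI[of _ h] exI[of _ "A e_last"] conjI) auto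
qed

lemma holder_set_liftable_at:
  fixes X :: "'a::euclidean_space set"
  assumes "holder_set X" "x \<in> X"
  shows "liftable_at X x"
proof (cases "x \<in> interior X")
  case False
  obtain \<alpha> where "0 < \<alpha>" and X: "closure (interior X) = X" and
    cusp_property: "uniform_cusp_property \<alpha> (interior X)"
    using assms(1) unfolding holder_set_def alpha_set_def by metis
  have "x \<in> frontier (interior X)"
    using False assms(2) X by (simp add: frontier_def)
  then obtain \<epsilon> r h A where "\<epsilon> > 0" "r > 0" "h > 0" "orthogonal_transformation A"
    and cusp: "\<forall>y \<in> closure (interior X) \<inter> ball x \<epsilon>.
      (\<lambda>z. y + A z) ` (holder_cusp \<alpha> r h :: 'a set) \<subseteq> interior X"
    using cusp_property unfolding uniform_cusp_property_def by blast
  have "(\<lambda>z. y + A z) ` holder_cusp \<alpha> r h \<subseteq> X" if "y \<in> X" "dist x y < \<epsilon>" for y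
    using cusp that X interior_subset by (fastforce simp: dist_commute)
  then show ?thesis
    by (rule liftable_at_cusp[OF \<open>0 < \<alpha>\<close> \<open>r > 0\<close> \<open>h > 0\<close> \<open>\<epsilon> > 0\<close>
        \<open>orthogonal_transformation A\<close>])
qed (rule liftable_at_interior)

text \<open>The path visits y_j, y_j + s_j e, y_(j+1) + s_j e, y_(j+1), ... for points y_j of S.\<close>

lemma fast_zigzag_sequence:
  fixes x :: "'a::real_normed_vector"
  assumes "liftable_at X x" "x \<in> closure S" "S \<subseteq> X"
  shows "\<exists>v. (\<forall>k. norm (v k - x) \<le> (1/2) ^ (k * k)) \<and>
    (\<forall>k. closed_segment (v k) (v (Suc k)) \<subseteq> X) \<and> (\<forall>N. \<exists>k\<ge>N. v k \<in> S)"
proof -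
  obtain \<epsilon> h e where "\<epsilon> > 0" "h > 0" "norm e = 1" and lift: "\<forall>s\<in>{0<..<h}. \<exists>\<rho>>0.
      \<forall>y\<in>X \<inter> ball x \<epsilon>. closed_segment y (y + s *\<^sub>R e) \<subseteq> X \<and>
        (\<forall>y'\<in>ball y \<rho>. closed_segment (y + s *\<^sub>R e) (y' + s *\<^sub>R e) \<subseteq> X)"
    using assms(1) unfolding liftable_at_def by blast
  define \<beta> :: "nat \<Rightarrow> real" where "\<beta> j = (1/2) ^ ((3 * j + 2) * (3 * j + 2))" for j
  define s where "s j = min (h / 2) (\<beta> j / 2)" for j
  have s: "s j \<in> {0<..<h}" "s j \<le> \<beta> j / 2" for j
    using \<open>h > 0\<close> by (auto simp: s_def \<beta>_def)
  obtain f where f: "\<forall>s\<in>{0<..<h}. f s > 0 \<and> (\<forall>y\<in>X \<inter> ball x \<epsilon>.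
      closed_segment y (y + s *\<^sub>R e) \<subseteq> X \<and>
      (\<forall>y'\<in>ball y (f s). closed_segment (y + s *\<^sub>R e) (y' + s *\<^sub>R e) \<subseteq> X))"
    using bchoice[OF lift] by blast
  define \<rho> where "\<rho> j = f (s j)" for j
  have \<rho>: "\<rho> j > 0" for j
    using f s(1) by (simp add: \<rho>_def)
  have lift_j: "\<forall>y\<in>X \<inter> ball x \<epsilon>. closed_segment y (y + s j *\<^sub>R e) \<subseteq> X \<and>
      (\<forall>y'\<in>ball y (\<rho> j). closed_segment (y + s j *\<^sub>R e) (y' + s j *\<^sub>R e) \<subseteq> X)" for j
    using f s(1)[of j] unfolding \<rho>_def by blast
  define \<rho>' where "\<rho>' j = Min (\<rho> ` {..j})" for j
  have \<rho>': "\<rho>' j > 0" "i \<le> j \<Longrightarrow> \<rho>' j \<le> \<rho> i" for i j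
    using \<rho> by (auto simp: \<rho>'_def)
  have "\<exists>y\<in>S. dist y x < min \<epsilon> (min (\<beta> j / 2) (\<rho>' j / 2))" for j
  proof -
    have "0 < min \<epsilon> (min (\<beta> j / 2) (\<rho>' j / 2))"
      using \<open>\<epsilon> > 0\<close> \<rho>'(1)[of j] by (simp add: \<beta>_def)
    then show ?thesis
      using assms(2) unfolding closure_approachable by blast
  qed
  then obtain y where y_S: "\<And>j. y j \<in> S" and
    y_close: "\<And>j. dist (y j) x < min \<epsilon> (min (\<beta> j / 2) (\<rho>' j / 2))"
    by metis
  have y_X: "y j \<in> X \<inter> ball x \<epsilon>" for j
    using y_S y_close assms(3) by (auto simp: dist_commute)
  have \<beta>_Suc: "\<beta> (Suc j) \<le> \<beta> j" for j
    unfolding \<beta>_def by (intro power_decreasing mult_le_mono) auto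
  define v where "v k = (let j = k div 3 in
      if k mod 3 = 0 then y j
      else if k mod 3 = 1 then y j + s j *\<^sub>R e
      else y (Suc j) + s j *\<^sub>R e)" for k
  have v_bound: "norm (v k - x) \<le> \<beta> (k div 3)" for k
  proof -
    define j where "j = k div 3"
    have y: "norm (y i - x) \<le> \<beta> j / 2" if "i = j \<or> i = Suc j" for i
      using y_close[of i] \<beta>_Suc[of j] that by (auto simp: dist_norm)
    have "norm (s j *\<^sub>R e) \<le> \<beta> j / 2"
      using s(2)[of j] s(1)[of j] \<open>norm e = 1\<close> by simp
    then have "norm (y i + s j *\<^sub>R e - x) \<le> \<beta> j" if "i = j \<or> i = Suc j" for i
      using y[OF that] norm_triangle_ineq[of "y i - x" "s j *\<^sub>R e"] by (simp add: algebra_simps)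
    moreover have "norm (y j - x) \<le> \<beta> j"
      using y[of j, OF disjI1[OF refl]] norm_ge_zero[of "y j - x"] by linarith
    ultimately show ?thesis
      by (simp add: v_def Let_def j_def[symmetric])
  qed
  show ?thesis
  proof (intro exI[of _ v] conjI allI)
    fix k :: nat
    have "k * k \<le> (3 * (k div 3) + 2) * (3 * (k div 3) + 2)"
      by (intro mult_le_mono) auto
    then have "\<beta> (k div 3) \<le> (1/2) ^ (k * k)"
      unfolding \<beta>_def by (intro power_decreasing) auto
    with v_bound show "norm (v k - x) \<le> (1/2) ^ (k * k)"
      by (rule order_trans)
  next
    fix N :: nat
    have "v (3 * N) \<in> S" using y_S by (simp add: v_def)
    then show "\<exists>k\<ge>N. v k \<in> S" by (intro exI[of _ "3 * N"]) auto
  next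
    fix k :: nat
    define j where "j = k div 3"
    have "dist (y j) (y (Suc j)) < \<rho> j"
    proof -
      have "dist (y j) (y (Suc j)) \<le> dist (y j) x + dist (y (Suc j)) x"
        by (rule dist_triangle2)
      moreover have "\<rho>' j \<le> \<rho> j" "\<rho>' (Suc j) \<le> \<rho> j"
        using \<rho>'(2) by auto
      ultimately show ?thesis
        using y_close[of j] y_close[of "Suc j"] by linarith
    qed
    then have horizontal: "closed_segment (y j + s j *\<^sub>R e) (y (Suc j) + s j *\<^sub>R e) \<subseteq> X"
      using lift_j[of j] y_X[of j] by auto
    have vertical: "closed_segment (y i) (y i + s j *\<^sub>R e) \<subseteq> X" for i
      using lift_j[of j] y_X[of i] by blast
    consider "k mod 3 = 0" | "k mod 3 = 1" | "k mod 3 = 2" by linarith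
    then show "closed_segment (v k) (v (Suc k)) \<subseteq> X"
    proof cases
      case 1
      then have "Suc k mod 3 = 1" "Suc k div 3 = j" unfolding j_def by presburger+
      with 1 show ?thesis using vertical[of j] by (simp add: v_def Let_def j_def[symmetric])
    next
      case 2
      then have "Suc k mod 3 = 2" "Suc k div 3 = j" unfolding j_def by presburger+
      with 2 show ?thesis using horizontal by (simp add: v_def Let_def j_def[symmetric])
    next
      case 3
      then have "Suc k mod 3 = 0" "Suc k div 3 = Suc j" unfolding j_def by presburger+
      with 3 show ?thesis using vertical[of "Suc j"]
        by (simp add: v_def Let_def j_def[symmetric] closed_segment_commute)
    qed
  qed
qed

section \<open>The two topologies\<close>

lemma openin_imp_cinf_open:
  assumes "openin (top_of_set X) U"
  shows "cinf_open X U"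
proof -
  obtain T where "open T" "U = X \<inter> T"
    using assms by (auto simp: openin_open)
  have "open (c -` U)" if "smooth_curve c" "range c \<subseteq> X" for c :: "real \<Rightarrow> 'a"
  proof -
    obtain D where "D 0 = c" "\<And>n t. (D n has_vector_derivative D (Suc n) t) (at t)"
      using \<open>smooth_curve c\<close> unfolding smooth_curve_def by blast
    then have "continuous_on UNIV c"
      by (metis continuous_at_imp_continuous_on has_vector_derivative_continuous)
    then have "open (c -` T)"
      using \<open>open T\<close> by (simp add: continuous_on_open_vimage)
    moreover have "c -` U = c -` T"
      using \<open>U = X \<inter> T\<close> that(2) by auto
    ultimately show ?thesis by simp
  qed
  then show ?thesis
    using \<open>U = X \<inter> T\<close> by (auto simp: cinf_open_def)
qed

lemma cinf_open_imp_openin: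
  fixes X :: "'a::euclidean_space set"
  assumes liftable: "\<And>x. x \<in> X \<Longrightarrow> liftable_at X x" and "cinf_open X U"
  shows "openin (top_of_set X) U"
  unfolding openin_euclidean_subtopology_iff
proof (intro conjI ballI)
  show "U \<subseteq> X" using \<open>cinf_open X U\<close> by (simp add: cinf_open_def)
  fix x assume "x \<in> U"
  show "\<exists>e>0. \<forall>x'\<in>X. dist x' x < e \<longrightarrow> x' \<in> U"
  proof (rule ccontr)
    assume "\<not> ?thesis"
    then have "x \<in> closure (X - U)"
      unfolding closure_approachable by (auto simp: dist_commute)
    then obtain v where v: "\<And>k. norm (v k - x) \<le> (1/2) ^ (k * k)"
      "\<And>k. closed_segment (v k) (v (Suc k)) \<subseteq> X" "\<And>N. \<exists>k\<ge>N. v k \<in> X - U"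
      using fast_zigzag_sequence[OF liftable] \<open>x \<in> U\<close> \<open>U \<subseteq> X\<close> by blast
    then obtain c where c: "smooth_curve c" "range c \<subseteq> X" "c 0 = x" "\<And>k. c ((1/2) ^ k) = v k"
      using smooth_curve_through_sequence \<open>x \<in> U\<close> \<open>U \<subseteq> X\<close> by blast
    then have "open (c -` U)"
      using \<open>cinf_open X U\<close> by (simp add: cinf_open_def)
    then obtain d where "d > 0" and d: "ball 0 d \<subseteq> c -` U"
      using c(3) \<open>x \<in> U\<close> open_contains_ball by blast
    obtain N where N: "(1/2::real) ^ N < d"
      using real_arch_pow_inv[of d "1/2"] \<open>d > 0\<close> by auto
    obtain k where "k \<ge> N" "v k \<in> X - U"
      using v(3) by blast
    have "(1/2::real) ^ k \<le> (1/2) ^ N"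
      using \<open>k \<ge> N\<close> by (intro power_decreasing) auto
    with N have "(1/2::real) ^ k < d"
      by linarith
    then have "(1/2::real) ^ k \<in> ball 0 d"
      by simp
    with d have "c ((1/2) ^ k) \<in> U"
      by blast
    with c(4) \<open>v k \<in> X - U\<close> show False by simp
  qed
qed

theorem proposition3p6:
  fixes X :: "'a::euclidean_space set"
  assumes "holder_set X"
  shows "\<forall>U. cinf_open X U \<longleftrightarrow> openin (top_of_set X) U"
proof -
  have "\<And>x. x \<in> X \<Longrightarrow> liftable_at X x"
    using assms by (rule holder_set_liftable_at)
  then show ?thesis
    using cinf_open_imp_openin openin_imp_cinf_open by blast
qed

end
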